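(* If retreat occurs, then there exist $u,L,c>0$ with $0<u<u_-$ (when $a+b<4$, the requirement $u<u_-$ is dropped) and, for every $\epsilon>0$, a number $x_0(\epsilon)>0$, such that for every solution $\mathbf u(t)$ of the mean-field equations with $\mathbf u(0)\in[0,1]^{\mathbb Z}$: if $u_x(0)\le u$ for all $|x|\le L$, then $u_x(t)\le\epsilon$ for all $t>0$ and all $|x|\le ct-x_0(\epsilon)$.
   Context: Fix $a,b>0$ and $M\ge1$; for $x,y\in\mathbb Z$ write $y\sim x$ iff $0<|x-y|\le M$. Mean-field equations: $u_x'=(a u_x^2+\frac{b}{2M}\sum_{y\sim x}u_y^2)(1-u_x)-u_x$, $x\in\mathbb Z$. Let $r=a+b$; for $r>4$, $u_\pm=1/2\pm(1/4-1/r)^{1/2}$; for $r=4$, $u_-=u_+=1/2$. Retreat (for $r\ge4$): there are $0<u_*<u_-\le u_+<u^*\le1$ such that the solution with $u_x(0)=u^*\mathbf 1(x<0)+u_*\mathbf 1(x\ge0)$ satisfies $u_{-1}(t_0)=u_*$ for some $t_0>0$. By convention, retreat also occurs whenever $r<4$. *)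

theory Defs
  imports Complex_Main
begin

definition mf_rhs :: "real \<Rightarrow> real \<Rightarrow> nat \<Rightarrow> (int \<Rightarrow> real) \<Rightarrow> int \<Rightarrow> real" where
  "mf_rhs a b M v x =
     (a * (v x)^2 + b / (2 * real M) * (\<Sum>y\<in>{x - int M .. x + int M} - {x}. (v y)^2))
       * (1 - v x) - v x"

text \<open>A solution of the mean-field equations on [0,\<infinity>) with values in [0,1]
  (the state space; [0,1]^Z is invariant and solutions there are unique).\<close>
definition mf_solution :: "real \<Rightarrow> real \<Rightarrow> nat \<Rightarrow> (real \<Rightarrow> int \<Rightarrow> real) \<Rightarrow> bool" where
  "mf_solution a b M U \<longleftrightarrow>
     (\<forall>t\<ge>0. \<forall>x. 0 \<le> U t x \<and> U t x \<le> 1) \<and>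
     (\<forall>x. \<forall>t\<ge>0. ((\<lambda>s. U s x) has_real_derivative mf_rhs a b M (U t) x) (at t within {0..}))"

definition u_minus :: "real \<Rightarrow> real" where
  "u_minus r = 1/2 - sqrt (1/4 - 1/r)"

definition u_plus :: "real \<Rightarrow> real" where
  "u_plus r = 1/2 + sqrt (1/4 - 1/r)"

definition retreat :: "real \<Rightarrow> real \<Rightarrow> nat \<Rightarrow> bool" where
  "retreat a b M \<longleftrightarrow>
     a + b < 4 \<or>
     (\<exists>ulow uup. 0 < ulow \<and> ulow < u_minus (a + b) \<and> u_minus (a + b) \<le> u_plus (a + b)
        \<and> u_plus (a + b) < uup \<and> uup \<le> 1 \<and>
        (\<exists>U. mf_solution a b M U \<and> (\<forall>x. U 0 x = (if x < 0 then uup else ulow)) \<and>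
             (\<exists>t0>0. U t0 (-1) = ulow)))"

end

theory Submission
  imports Defs "HOL-Analysis.Analysis"
begin

text \<open>Everything rests on comparison with supersolutions. For a + b < 4 the reaction term
  r p^2 (1 - p) - p is at most -(1 - r/4) p, so all solutions decay uniformly. For a + b \<ge> 4,
  retreat says that the front solution v at time t0 lies below its initial data shifted by one
  site; by comparison this improves, after a longer period T, to a uniform margin m below uup
  everywhere and below ulow on x \<ge> -1. Comparing a solution with copies of v reflected at the
  ends of an interval on which it is below ulow, plus exponential tails e^(mu t) e^(+-x) that
  absorb the data outside, shows that such an interval grows by one site at each end per
  period T. A solution that is small on a long enough interval is, after a fixed entry time,
  below uup everywhere and below ulow on a fixed interval; this interval then spreads at speed
  1/T, and behind its ends the solution decays like ulow e^(-kappa t).\<close>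

section \<open>Comparison principle\<close>

lemma growth_bound_from_nonpos:
  fixes \<phi> \<phi>' :: "real \<Rightarrow> real"
  assumes "t1 \<le> t" and cont: "continuous_on {t1..t} \<phi>"
    and der: "\<And>s. t1 < s \<Longrightarrow> s < t \<Longrightarrow> (\<phi> has_real_derivative \<phi>' s) (at s)"
    and start: "\<phi> t1 \<le> 0"
    and bound: "\<And>s. t1 < s \<Longrightarrow> s < t \<Longrightarrow> \<phi> s > 0 \<Longrightarrow> \<phi>' s \<le> B" and "B \<ge> 0"
  shows "\<phi> t \<le> B * (t - t1)"
proof (cases "\<phi> t \<le> 0")
  case True
  then show ?thesis using assms by (simp add: mult_nonneg_nonneg order_trans)
next
  case False
  \<comment> \<open>On the interval after the last zero s0 of \<phi>, the mean value theorem applies with \<phi> > 0.\<close>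
  define A where "A = {s \<in> {t1..t}. \<phi> s \<le> 0}"
  have "closed A" unfolding A_def
    by (rule continuous_on_closed_Collect_le) (use cont in auto)
  moreover have "A \<noteq> {}" "bdd_above A" using assms unfolding A_def by (auto intro: bdd_aboveI[where M=t])
  ultimately have "Sup A \<in> A" by (intro closed_contains_Sup)
  define s0 where "s0 = Sup A"
  have s0: "t1 \<le> s0" "s0 \<le> t" "\<phi> s0 \<le> 0" using \<open>Sup A \<in> A\<close> unfolding A_def s0_def by auto
  have "s0 < t" using s0 False by (cases "s0 = t") auto
  have pos: "\<phi> s > 0" if "s0 < s" "s \<le> t" for s
  proof (rule ccontr)
    assume "\<not> \<phi> s > 0"
    hence "s \<le> s0" unfolding s0_def using that s0 \<open>bdd_above A\<close> by (intro cSup_upper) (auto simp: A_def)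
    thus False using that by simp
  qed
  have "continuous_on {s0..t} \<phi>" using cont by (rule continuous_on_subset) (use s0 in auto)
  moreover have "\<phi> differentiable (at s)" if "s0 < s" "s < t" for s
    using der that s0 by (meson order_le_less_trans real_differentiable_def)
  ultimately obtain l z where z: "s0 < z" "z < t" "DERIV \<phi> z :> l" "\<phi> t - \<phi> s0 = (t - s0) * l"
    using MVT[OF \<open>s0 < t\<close>] by blast
  have "l = \<phi>' z" using DERIV_unique[OF z(3) der] z s0 by simp
  hence "l \<le> B" using bound[of z] pos[of z] z s0 by simp
  hence "(t - s0) * l \<le> (t - s0) * B" using \<open>s0 < t\<close> by (intro mult_left_mono) auto
  also have "\<dots> \<le> (t - t1) * B" using s0 \<open>B \<ge> 0\<close> by (intro mult_right_mono) auto
  finally show ?thesis using z s0 by (simp add: mult.commute)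
qed

abbreviation nbhd :: "nat \<Rightarrow> int \<Rightarrow> int set" where
  "nbhd M x \<equiv> {x - int M .. x + int M} - {x}"

lemma card_nbhd: "card (nbhd M x) = 2 * M"
  by (subst card_Diff_singleton) auto

lemma mf_rhs_const:
  assumes "M \<ge> 1"
  shows "mf_rhs a b M (\<lambda>_. c) x = (a + b) * c^2 * (1 - c) - c"
proof -
  have "b / (2 * real M) * (\<Sum>y\<in>nbhd M x. c^2) = b * c^2"
    using assms by (simp add: card_nbhd)
  thus ?thesis unfolding mf_rhs_def by (simp add: algebra_simps)
qed

lemma square_diff_le:
  fixes p q :: real
  assumes "0 \<le> p" "p \<le> 1" "0 \<le> q" "q \<le> 1" "p \<le> q + S" "S \<ge> 0"
  shows "p^2 - q^2 \<le> 2 * S"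
proof (cases "p \<le> q")
  case True
  then show ?thesis using assms by (smt (verit) power_mono)
next
  case False
  have "p^2 - q^2 = (p - q) * (p + q)" by (simp add: power2_eq_square algebra_simps)
  also have "\<dots> \<le> S * 2" using assms False by (intro mult_mono) auto
  finally show ?thesis by simp
qed

lemma mf_rhs_diff_le:
  fixes v w :: "int \<Rightarrow> real"
  assumes v01: "\<And>y. 0 \<le> v y \<and> v y \<le> 1" and w01: "\<And>y. 0 \<le> w y \<and> w y \<le> 1" and "S \<ge> 0"
    and nb: "\<And>y. y \<in> nbhd M x \<Longrightarrow> v y \<le> w y + S" and "w x \<le> v x" "v x \<le> w x + S"
    and "a \<ge> 0" "b \<ge> 0" "M \<ge> 1"
  shows "mf_rhs a b M v x - mf_rhs a b M w x \<le> (2*a + 2*b) * S"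
proof -
  define \<beta> where "\<beta> = b / (2 * real M)"
  define A where "A = a * (v x)^2 + \<beta> * (\<Sum>y\<in>nbhd M x. (v y)^2)"
  define A' where "A' = a * (w x)^2 + \<beta> * (\<Sum>y\<in>nbhd M x. (w y)^2)"
  have "\<beta> \<ge> 0" using assms unfolding \<beta>_def by auto
  have "(\<Sum>y\<in>nbhd M x. (v y)^2) - (\<Sum>y\<in>nbhd M x. (w y)^2) \<le> (\<Sum>y\<in>nbhd M x. 2 * S)"
    unfolding sum_subtractf[symmetric]
    by (intro sum_mono square_diff_le) (use v01 w01 nb \<open>S \<ge> 0\<close> in auto)
  also have "\<dots> = real (2 * M) * (2 * S)" by (simp add: card_nbhd)
  finally have "\<beta> * ((\<Sum>y\<in>nbhd M x. (v y)^2) - (\<Sum>y\<in>nbhd M x. (w y)^2)) \<le> \<beta> * (real (2 * M) * (2 * S))"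
    using \<open>\<beta> \<ge> 0\<close> by (rule mult_left_mono)
  also have "\<dots> = 2 * b * S" using assms unfolding \<beta>_def by simp
  finally have neighbours: "\<beta> * ((\<Sum>y\<in>nbhd M x. (v y)^2) - (\<Sum>y\<in>nbhd M x. (w y)^2)) \<le> 2 * b * S" .
  have "a * ((v x)^2 - (w x)^2) \<le> a * (2 * S)"
    using square_diff_le[of "v x" "w x" S] v01 w01 assms by (intro mult_left_mono) auto
  with neighbours have AA: "A - A' \<le> (2*a + 2*b) * S" unfolding A_def A'_def by (simp add: algebra_simps)
  have "A' \<ge> 0" unfolding A'_def using \<open>\<beta> \<ge> 0\<close> \<open>a \<ge> 0\<close> by (simp add: sum_nonneg)
  have "A * (1 - v x) - A' * (1 - w x) - (v x - w x) = (A - A') * (1 - v x) - (A' + 1) * (v x - w x)"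
    by (simp add: algebra_simps)
  also have "\<dots> \<le> (A - A') * (1 - v x)" using \<open>A' \<ge> 0\<close> \<open>w x \<le> v x\<close> by simp
  also have "\<dots> \<le> (2*a + 2*b) * S"
  proof (cases "A - A' \<le> 0")
    case True
    thus ?thesis using v01[of x] assms by (smt (verit) mult_nonneg_nonneg mult_nonpos_nonneg)
  next
    case False
    have "(A - A') * (1 - v x) \<le> (A - A') * 1" using False v01[of x] by (intro mult_left_mono) auto
    thus ?thesis using AA by simp
  qed
  finally show ?thesis unfolding mf_rhs_def A_def A'_def \<beta>_def by simp
qed

lemma mf_rhs_translate: "mf_rhs a b M (\<lambda>y. w (y + k)) x = mf_rhs a b M w (x + k)"
proof -
  have "(\<Sum>y\<in>nbhd M x. (w (y + k))^2) = (\<Sum>z\<in>nbhd M (x + k). (w z)^2)"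
    by (rule sum.reindex_bij_witness[where i="\<lambda>z. z - k" and j="\<lambda>y. y + k"]) auto
  thus ?thesis unfolding mf_rhs_def by simp
qed

lemma mf_rhs_reflect: "mf_rhs a b M (\<lambda>y. w (k - y)) x = mf_rhs a b M w (k - x)"
proof -
  have "(\<Sum>y\<in>nbhd M x. (w (k - y))^2) = (\<Sum>z\<in>nbhd M (k - x). (w z)^2)"
    by (rule sum.reindex_bij_witness[where i="\<lambda>z. k - z" and j="\<lambda>y. k - y"]) auto
  thus ?thesis unfolding mf_rhs_def by simp
qed

lemma mf_solution_translate:
  "mf_solution a b M U \<Longrightarrow> mf_solution a b M (\<lambda>t x. U t (x + k))"
  unfolding mf_solution_def by (auto simp: mf_rhs_translate)

lemma mf_solution_reflect:
  "mf_solution a b M U \<Longrightarrow> mf_solution a b M (\<lambda>t x. U t (k - x))"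
  unfolding mf_solution_def by (auto simp: mf_rhs_reflect)

lemma has_real_derivative_time_shift:
  assumes "(f has_real_derivative D) (at (t + \<tau>) within {0..})" "\<tau> \<ge> 0" "t \<ge> 0"
  shows "((\<lambda>s. f (s + \<tau>)) has_real_derivative D) (at t within {0..})"
proof -
  have shift: "((\<lambda>s. s + \<tau>) has_real_derivative 1) (at t within {0..})"
    by (auto intro!: derivative_eq_intros)
  have "(f has_real_derivative D) (at ((\<lambda>s. s + \<tau>) t) within ((\<lambda>s. s + \<tau>) ` {0..}))"
    using assms(1) by (rule has_field_derivative_subset) (use assms in auto)
  from DERIV_image_chain[OF this shift] show ?thesis by (simp add: o_def)
qed

lemma mf_solution_time_shift:
  "mf_solution a b M U \<Longrightarrow> \<tau> \<ge> 0 \<Longrightarrow> mf_solution a b M (\<lambda>t. U (t + \<tau>))"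
  unfolding mf_solution_def by (auto intro!: has_real_derivative_time_shift)

lemma has_real_derivative_at_interior:
  assumes "(f has_real_derivative D) (at s within {0..})" "s > 0"
  shows "(f has_real_derivative D) (at s)"
proof -
  have "at s within {0..} = at s within UNIV"
    by (rule at_within_nhd[where S="{0<..}"]) (use assms in auto)
  thus ?thesis using assms by simp
qed

text \<open>A supersolution may exceed 1; only its truncation at 1 enters the nonlinearity, and the
  inequality is required only where it does not exceed 1. This is what allows adding
  exponential tails to bounded supersolutions.\<close>
definition mf_supersolution ::
    "real \<Rightarrow> real \<Rightarrow> nat \<Rightarrow> (real \<Rightarrow> int \<Rightarrow> real) \<Rightarrow> (real \<Rightarrow> int \<Rightarrow> real) \<Rightarrow> bool" where
  "mf_supersolution a b M Z Z' \<longleftrightarrow> (\<forall>t\<ge>0. \<forall>x. 0 \<le> Z t x) \<and>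
     (\<forall>t\<ge>0. \<forall>x. ((\<lambda>s. Z s x) has_real_derivative Z' t x) (at t within {0..})) \<and>
     (\<forall>t\<ge>0. \<forall>x. Z t x \<le> 1 \<longrightarrow> mf_rhs a b M (\<lambda>y. min 1 (Z t y)) x \<le> Z' t x)"

definition mf_bounded_supersolution ::
    "real \<Rightarrow> real \<Rightarrow> nat \<Rightarrow> (real \<Rightarrow> int \<Rightarrow> real) \<Rightarrow> (real \<Rightarrow> int \<Rightarrow> real) \<Rightarrow> bool" where
  "mf_bounded_supersolution a b M W W' \<longleftrightarrow> (\<forall>t\<ge>0. \<forall>x. 0 \<le> W t x \<and> W t x \<le> 1) \<and>
     (\<forall>t\<ge>0. \<forall>x. ((\<lambda>s. W s x) has_real_derivative W' t x) (at t within {0..})) \<and>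
     (\<forall>t\<ge>0. \<forall>x. mf_rhs a b M (W t) x \<le> W' t x)"

lemma mf_solution_bounded_supersolution:
  "mf_solution a b M U \<Longrightarrow> mf_bounded_supersolution a b M U (\<lambda>t. mf_rhs a b M (U t))"
  unfolding mf_solution_def mf_bounded_supersolution_def by auto

lemma mf_bounded_supersolution_supersolution:
  assumes "mf_bounded_supersolution a b M W W'"
  shows "mf_supersolution a b M W W'"
proof -
  have "(\<lambda>y. min 1 (W t y)) = W t" if "t \<ge> 0" for t
    using assms that unfolding mf_bounded_supersolution_def by auto
  thus ?thesis using assms unfolding mf_supersolution_def mf_bounded_supersolution_def by auto
qed

lemma mf_excess_growth:
  assumes sol: "mf_solution a b M U" and sup: "mf_supersolution a b M Z Z'"
    and ab: "a \<ge> 0" "b \<ge> 0" "M \<ge> 1" and "0 \<le> t1" "t1 \<le> t"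
    and start: "U t1 x \<le> Z t1 x" and "S \<ge> 0"
    and excess: "\<And>r y. t1 \<le> r \<Longrightarrow> r \<le> t \<Longrightarrow> U r y \<le> Z r y + S"
  shows "U t x - Z t x \<le> (2*a + 2*b) * S * (t - t1)"
proof (rule growth_bound_from_nonpos[where \<phi>'="\<lambda>s. mf_rhs a b M (U s) x - Z' s x"])
  have U01: "0 \<le> U s y \<and> U s y \<le> 1" if "s \<ge> 0" for s y
    using sol that unfolding mf_solution_def by auto
  have deriv: "((\<lambda>s. U s x - Z s x) has_real_derivative mf_rhs a b M (U s) x - Z' s x) (at s within {0..})"
    if "s \<ge> 0" for s
    using sol sup that by (intro derivative_intros) (auto simp: mf_solution_def mf_supersolution_def)
  have "continuous_on {0..} (\<lambda>s. U s x - Z s x)" by (rule DERIV_continuous_on) (use deriv in auto)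
  thus "continuous_on {t1..t} (\<lambda>s. U s x - Z s x)" by (rule continuous_on_subset) (use \<open>0 \<le> t1\<close> in auto)
  show "((\<lambda>s. U s x - Z s x) has_real_derivative mf_rhs a b M (U r) x - Z' r x) (at r)" if "t1 < r" for r
    using has_real_derivative_at_interior[OF deriv] that \<open>0 \<le> t1\<close> by simp
  show "mf_rhs a b M (U r) x - Z' r x \<le> (2*a + 2*b) * S" if r: "t1 < r" "r < t" "U r x - Z r x > 0" for r
  proof -
    have "r \<ge> 0" using r \<open>0 \<le> t1\<close> by simp
    have "Z r x \<le> 1" using r(3) U01[OF \<open>r \<ge> 0\<close>, of x] by simp
    hence "mf_rhs a b M (\<lambda>y. min 1 (Z r y)) x \<le> Z' r x"
      using sup \<open>r \<ge> 0\<close> unfolding mf_supersolution_def by auto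
    moreover have "mf_rhs a b M (U r) x - mf_rhs a b M (\<lambda>y. min 1 (Z r y)) x \<le> (2*a + 2*b) * S"
    proof (rule mf_rhs_diff_le)
      show "U r y \<le> min 1 (Z r y) + S" for y
        using excess[of r y] U01[OF \<open>r \<ge> 0\<close>, of y] r \<open>S \<ge> 0\<close> by (simp add: min_def)
      then show "U r x \<le> min 1 (Z r x) + S" .
      show "min 1 (Z r x) \<le> U r x" using r(3) by simp
      show "0 \<le> min 1 (Z r y) \<and> min 1 (Z r y) \<le> 1" for y
        using sup \<open>r \<ge> 0\<close> unfolding mf_supersolution_def by auto
    qed (use U01 \<open>r \<ge> 0\<close> \<open>S \<ge> 0\<close> ab in auto)
    ultimately show ?thesis by simp
  qed
qed (use assms in auto)

lemma mf_comparison_short_time: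
  assumes sol: "mf_solution a b M U" and sup: "mf_supersolution a b M Z Z'"
    and ab: "a \<ge> 0" "b \<ge> 0" "M \<ge> 1"
    and "t1 \<ge> 0" and start: "\<And>x. U t1 x \<le> Z t1 x"
    and t: "t1 \<le> t" "t \<le> t1 + 1 / (4*a + 4*b + 2)"
  shows "U t x \<le> Z t x"
proof -
  define h where "h = 1 / (4*a + 4*b + 2)"
  have "h > 0" "(2*a + 2*b) * h \<le> 1/2" using ab unfolding h_def by (auto simp: field_simps)
  have U01: "0 \<le> U s y \<and> U s y \<le> 1" if "s \<ge> 0" for s y
    using sol that unfolding mf_solution_def by auto
  have Z0: "0 \<le> Z s y" if "s \<ge> 0" for s y using sup that unfolding mf_supersolution_def by auto
  \<comment> \<open>S is the largest excess of U over Z on the time strip; by growth it satisfies S \<le> S/2.\<close>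
  define SS where "SS = {max 0 (U s y - Z s y) | s y. t1 \<le> s \<and> s \<le> t1 + h}"
  define S where "S = Sup SS"
  have "max 0 (U t1 0 - Z t1 0) \<in> SS" unfolding SS_def using \<open>h > 0\<close> by force
  hence "SS \<noteq> {}" by blast
  have "U s y - Z s y \<le> 1" if "t1 \<le> s" for s y using U01[of s y] Z0[of s y] that \<open>t1 \<ge> 0\<close> by simp
  hence "bdd_above SS" unfolding SS_def by (intro bdd_aboveI[where M=1]) auto
  have excess: "U s y \<le> Z s y + S" if "t1 \<le> s" "s \<le> t1 + h" for s y
  proof -
    have "max 0 (U s y - Z s y) \<in> SS" unfolding SS_def using that by blast
    hence "max 0 (U s y - Z s y) \<le> S" unfolding S_def using \<open>bdd_above SS\<close> by (rule cSup_upper)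
    thus ?thesis by simp
  qed
  have "max 0 (U t1 0 - Z t1 0) \<le> S"
    unfolding S_def using \<open>max 0 (U t1 0 - Z t1 0) \<in> SS\<close> \<open>bdd_above SS\<close> by (rule cSup_upper)
  hence "S \<ge> 0" by simp
  have half: "U s y - Z s y \<le> S / 2" if s: "t1 \<le> s" "s \<le> t1 + h" for s y
  proof -
    have "U s y - Z s y \<le> (2*a + 2*b) * S * (s - t1)"
      using s excess by (intro mf_excess_growth[OF sol sup ab \<open>t1 \<ge> 0\<close> _ start \<open>S \<ge> 0\<close>]) auto
    also have "\<dots> \<le> (2*a + 2*b) * S * h" using s ab \<open>S \<ge> 0\<close> by (intro mult_left_mono) auto
    also have "\<dots> \<le> S / 2"
      using mult_left_mono[OF \<open>(2*a + 2*b) * h \<le> 1/2\<close> \<open>S \<ge> 0\<close>] by (simp add: ac_simps)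
    finally show ?thesis .
  qed
  have "S \<le> S / 2" unfolding S_def
  proof (rule cSup_least[OF \<open>SS \<noteq> {}\<close>])
    fix z assume "z \<in> SS"
    then obtain s y where "z = max 0 (U s y - Z s y)" "t1 \<le> s" "s \<le> t1 + h" unfolding SS_def by blast
    thus "z \<le> Sup SS / 2" using half[of s y] \<open>S \<ge> 0\<close> unfolding S_def by (simp add: max_def)
  qed
  hence "S = 0" using \<open>S \<ge> 0\<close> by simp
  thus ?thesis using excess[of t x] t unfolding h_def by simp
qed

lemma mf_comparison:
  assumes sol: "mf_solution a b M U" and sup: "mf_supersolution a b M Z Z'"
    and init: "\<And>x. U 0 x \<le> Z 0 x" and ab: "a \<ge> 0" "b \<ge> 0" "M \<ge> 1" and "t \<ge> 0"
  shows "U t x \<le> Z t x"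
proof -
  define h where "h = 1 / (4*a + 4*b + 2)"
  have "h > 0" unfolding h_def using ab by simp
  have "\<forall>s x. 0 \<le> s \<and> s \<le> real n * h \<longrightarrow> U s x \<le> Z s x" for n
  proof (induction n)
    case 0
    then show ?case using init by auto
  next
    case (Suc n)
    show ?case
    proof (intro allI impI)
      fix s x assume s: "0 \<le> s \<and> s \<le> real (Suc n) * h"
      show "U s x \<le> Z s x"
      proof (cases "s \<le> real n * h")
        case True
        thus ?thesis using Suc.IH s by auto
      next
        case False
        have "s \<le> real n * h + 1 / (4*a + 4*b + 2)" using s unfolding h_def by (simp add: add_divide_distrib)
        then show ?thesis
          using mf_comparison_short_time[OF sol sup ab, of "real n * h" s x] Suc.IH \<open>h > 0\<close> s False
          by auto
      qed
    qed
  qed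
  moreover obtain n where "t / h \<le> real n" using real_arch_simple by blast
  hence "t \<le> real n * h" using \<open>h > 0\<close> by (simp add: field_simps)
  ultimately show ?thesis using \<open>t \<ge> 0\<close> by blast
qed

section \<open>Exponential tails and spatially constant supersolutions\<close>

text \<open>Weights that change by at most the factor e^M across a neighbourhood, such as e^x and e^-x,
  grow at most at rate tail_rate under the linearised equation.\<close>
definition tail_rate :: "real \<Rightarrow> real \<Rightarrow> nat \<Rightarrow> real" where
  "tail_rate a b M = (2*a + 2*b) * exp (real M)"

lemma tail_rate_nonneg: "a \<ge> 0 \<Longrightarrow> b \<ge> 0 \<Longrightarrow> tail_rate a b M \<ge> 0"
  unfolding tail_rate_def by simp

lemma mf_supersolution_add_tail:
  assumes W: "mf_bounded_supersolution a b M W W'"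
    and G: "\<And>x. G x > 0" and G_nbhd: "\<And>x y. \<bar>y - x\<bar> \<le> int M \<Longrightarrow> G y \<le> exp (real M) * G x"
    and ab: "a \<ge> 0" "b \<ge> 0" "M \<ge> 1"
  shows "mf_supersolution a b M (\<lambda>t x. W t x + exp (tail_rate a b M * t) * G x)
           (\<lambda>t x. W' t x + tail_rate a b M * exp (tail_rate a b M * t) * G x)"
  unfolding mf_supersolution_def
proof (intro conjI allI impI)
  fix t x assume t: "t \<ge> (0::real)"
  define \<mu> where "\<mu> = tail_rate a b M"
  define e where "e = exp (\<mu> * t)"
  have "e > 0" unfolding e_def by simp
  have W01: "0 \<le> W t y \<and> W t y \<le> 1" for y using W t unfolding mf_bounded_supersolution_def by auto
  show "0 \<le> W t x + exp (tail_rate a b M * t) * G x" using W01[of x] G[of x] by (simp add: less_imp_le)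
  show "((\<lambda>s. W s x + exp (tail_rate a b M * s) * G x) has_real_derivative
          W' t x + tail_rate a b M * exp (tail_rate a b M * t) * G x) (at t within {0..})"
    using W t unfolding mf_bounded_supersolution_def
    by (auto intro!: derivative_eq_intros)
  assume le1: "W t x + exp (tail_rate a b M * t) * G x \<le> 1"
  have "mf_rhs a b M (\<lambda>y. min 1 (W t y + e * G y)) x - mf_rhs a b M (W t) x
          \<le> (2*a + 2*b) * (exp (real M) * e * G x)"
  proof (rule mf_rhs_diff_le)
    show "min 1 (W t y + e * G y) \<le> W t y + exp (real M) * e * G x" if "y \<in> nbhd M x" for y
    proof -
      have "e * G y \<le> e * (exp (real M) * G x)"
        using G_nbhd[of y x] that \<open>e > 0\<close> by (intro mult_left_mono) auto
      thus ?thesis by (simp add: algebra_simps)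
    qed
    have "e * G x \<le> exp (real M) * e * G x" using \<open>e > 0\<close> G[of x] by simp
    thus "min 1 (W t x + e * G x) \<le> W t x + exp (real M) * e * G x" by simp
    show "W t x \<le> min 1 (W t x + e * G x)" using le1 G[of x] \<open>e > 0\<close> W01[of x]
      unfolding e_def \<mu>_def by (simp add: less_imp_le)
  qed (use W01 G \<open>e > 0\<close> ab in \<open>auto simp: less_imp_le\<close>)
  moreover have "(2*a + 2*b) * (exp (real M) * e * G x) = \<mu> * e * G x"
    unfolding \<mu>_def tail_rate_def by simp
  moreover have "mf_rhs a b M (W t) x \<le> W' t x" using W t unfolding mf_bounded_supersolution_def by auto
  ultimately show "mf_rhs a b M (\<lambda>y. min 1 (W t y + exp (tail_rate a b M * t) * G y)) x
      \<le> W' t x + tail_rate a b M * exp (tail_rate a b M * t) * G x"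
    unfolding e_def \<mu>_def by simp
qed

lemma exp_diff_nbhd_le:
  "\<bar>y - x\<bar> \<le> int M \<Longrightarrow> exp (c - real_of_int y) \<le> exp (real M) * exp (c - real_of_int x)"
  unfolding exp_add[symmetric] by (auto simp: abs_le_iff)

definition bump :: "real \<Rightarrow> int \<Rightarrow> real" where
  "bump R x = exp (real_of_int x - R) + exp (- real_of_int x - R)"

lemma bump_pos: "bump R x > 0"
  unfolding bump_def by (intro add_pos_pos) auto

lemma bump_nbhd_le:
  assumes "\<bar>y - x\<bar> \<le> int M"
  shows "bump R y \<le> exp (real M) * bump R x"
proof -
  have "real_of_int y - R \<le> real M + (real_of_int x - R)"
    "- real_of_int y - R \<le> real M + (- real_of_int x - R)"
    using assms by (auto simp: abs_le_iff)
  thus ?thesis unfolding bump_def distrib_left exp_add[symmetric] by (intro add_mono) auto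
qed

lemma one_le_bump:
  assumes "R \<le> \<bar>real_of_int x\<bar>"
  shows "1 \<le> bump R x"
proof (cases "x \<ge> 0")
  case True
  hence "1 \<le> exp (real_of_int x - R)" using assms by simp
  thus ?thesis unfolding bump_def by (simp add: add_increasing2)
next
  case False
  hence "1 \<le> exp (- real_of_int x - R)" using assms by simp
  thus ?thesis unfolding bump_def by (simp add: add_increasing)
qed

lemma bump_le: "bump R x \<le> 2 * exp (\<bar>real_of_int x\<bar> - R)"
proof -
  have "exp (real_of_int x - R) \<le> exp (\<bar>real_of_int x\<bar> - R)"
    "exp (- real_of_int x - R) \<le> exp (\<bar>real_of_int x\<bar> - R)" by simp_all
  thus ?thesis unfolding bump_def by linarith
qed

lemma decay_plus_bump_le:
  assumes "0 < \<epsilon>" "0 \<le> l" "l \<le> 1"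
    and decayed: "ln (2 / \<epsilon>) \<le> \<kappa> * s" and far: "\<mu> * s + \<bar>real_of_int x\<bar> - R \<le> - ln (4 / \<epsilon>)"
  shows "l * exp (- \<kappa> * s) + exp (\<mu> * s) * bump R x \<le> \<epsilon>"
proof -
  have "exp (- \<kappa> * s) \<le> exp (- ln (2 / \<epsilon>))" using decayed by simp
  also have "\<dots> = \<epsilon> / 2" using \<open>0 < \<epsilon>\<close> by (simp add: exp_minus)
  finally have "l * exp (- \<kappa> * s) \<le> \<epsilon> / 2"
    using \<open>0 \<le> l\<close> \<open>l \<le> 1\<close> by (meson exp_ge_zero mult_left_le_one_le order_trans)
  moreover have "exp (\<mu> * s) * bump R x \<le> exp (\<mu> * s) * (2 * exp (\<bar>real_of_int x\<bar> - R))"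
    using bump_le by (intro mult_left_mono) auto
  moreover have "\<dots> = 2 * exp (\<mu> * s + \<bar>real_of_int x\<bar> - R)" by (simp add: exp_add[symmetric] algebra_simps)
  moreover have "\<dots> \<le> 2 * exp (- ln (4 / \<epsilon>))" using far by simp
  moreover have "\<dots> = \<epsilon> / 2" using \<open>0 < \<epsilon>\<close> by (simp add: exp_minus)
  ultimately show ?thesis by linarith
qed

text \<open>Spatially constant configurations evolve by the scalar equation p' = r p^2 (1 - p) - p
  with r = a + b.\<close>
definition logistic_supersolution :: "real \<Rightarrow> (real \<Rightarrow> real) \<Rightarrow> (real \<Rightarrow> real) \<Rightarrow> bool" where
  "logistic_supersolution r P P' \<longleftrightarrow> (\<forall>t\<ge>0. 0 \<le> P t \<and> P t \<le> 1 \<and>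
     (P has_real_derivative P' t) (at t within {0..}) \<and> r * (P t)^2 * (1 - P t) - P t \<le> P' t)"

lemma logistic_supersolution_mf:
  assumes "logistic_supersolution (a + b) P P'" "M \<ge> 1"
  shows "mf_bounded_supersolution a b M (\<lambda>t x. P t) (\<lambda>t x. P' t)"
  using assms unfolding logistic_supersolution_def mf_bounded_supersolution_def
  by (simp add: mf_rhs_const eta_contract_eq)

lemma mult_one_minus_mono_below_half:
  fixes x y :: real
  assumes "0 \<le> x" "x \<le> y" "y \<le> 1/2"
  shows "x * (1 - x) \<le> y * (1 - y)"
proof -
  have "0 \<le> (y - x) * (1 - x - y)" using assms by (intro mult_nonneg_nonneg) auto
  thus ?thesis by (simp add: algebra_simps)
qed

lemma mult_one_minus_antimono_above_half:
  fixes x y :: real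
  assumes "1/2 \<le> y" "y \<le> x"
  shows "x * (1 - x) \<le> y * (1 - y)"
proof -
  have "(x - y) * (1 - x - y) \<le> 0" using assms by (intro mult_nonneg_nonpos) auto
  thus ?thesis by (simp add: algebra_simps)
qed

lemma logistic_supersolution_decay:
  assumes l: "0 \<le> l" "l \<le> 1" and "0 \<le> \<kappa>"
    and small: "\<And>p. 0 \<le> p \<Longrightarrow> p \<le> l \<Longrightarrow> r * (p * (1 - p)) \<le> 1 - \<kappa>"
  shows "logistic_supersolution r (\<lambda>t. l * exp (- \<kappa> * t)) (\<lambda>t. - \<kappa> * (l * exp (- \<kappa> * t)))"
  unfolding logistic_supersolution_def
proof (intro allI impI conjI)
  fix t :: real assume "t \<ge> 0"
  define P where "P = l * exp (- \<kappa> * t)"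
  have "exp (- \<kappa> * t) \<le> 1" using \<open>0 \<le> \<kappa>\<close> \<open>t \<ge> 0\<close> by simp
  hence P: "0 \<le> P" "P \<le> l" unfolding P_def using l by (auto simp: mult_left_le)
  thus "0 \<le> l * exp (- \<kappa> * t)" "l * exp (- \<kappa> * t) \<le> 1" using l unfolding P_def by auto
  show "((\<lambda>t. l * exp (- \<kappa> * t)) has_real_derivative - \<kappa> * (l * exp (- \<kappa> * t))) (at t within {0..})"
    by (auto intro!: derivative_eq_intros)
  have "P * (r * (P * (1 - P)) - 1 + \<kappa>) \<le> 0" using P small[OF P] by (intro mult_nonneg_nonpos) auto
  thus "r * (l * exp (- \<kappa> * t))^2 * (1 - l * exp (- \<kappa> * t)) - l * exp (- \<kappa> * t)
      \<le> - \<kappa> * (l * exp (- \<kappa> * t))"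
    unfolding P_def[symmetric] by (simp add: power2_eq_square algebra_simps)
qed

text \<open>On [c, p0] the logistic drift is at most -c (1 - r c (1 - c)).\<close>
lemma logistic_supersolution_relax:
  assumes c: "1/2 \<le> c" "c < p0" "p0 \<le> 1" and "0 \<le> r" "0 < \<gamma>"
    and rate: "\<gamma> * (p0 - c) \<le> c * (1 - r * (c * (1 - c)))"
  shows "logistic_supersolution r (\<lambda>t. c + (p0 - c) * exp (- \<gamma> * t)) (\<lambda>t. - \<gamma> * ((p0 - c) * exp (- \<gamma> * t)))"
  unfolding logistic_supersolution_def
proof (intro allI impI conjI)
  fix t :: real assume "t \<ge> 0"
  define Y where "Y = c + (p0 - c) * exp (- \<gamma> * t)"
  have "exp (- \<gamma> * t) \<le> 1" using \<open>0 < \<gamma>\<close> \<open>t \<ge> 0\<close> by simp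
  hence decay_le: "(p0 - c) * exp (- \<gamma> * t) \<le> p0 - c" using c by (intro mult_left_le) auto
  moreover have "0 \<le> (p0 - c) * exp (- \<gamma> * t)" using c by simp
  ultimately have Y: "c \<le> Y" "Y \<le> p0" unfolding Y_def by linarith+
  thus "0 \<le> c + (p0 - c) * exp (- \<gamma> * t)" "c + (p0 - c) * exp (- \<gamma> * t) \<le> 1"
    using c unfolding Y_def by auto
  show "((\<lambda>t. c + (p0 - c) * exp (- \<gamma> * t)) has_real_derivative - \<gamma> * ((p0 - c) * exp (- \<gamma> * t)))
      (at t within {0..})"
    by (auto intro!: derivative_eq_intros)
  have "0 < \<gamma> * (p0 - c)" using c \<open>0 < \<gamma>\<close> by simp
  hence "0 < c * (1 - r * (c * (1 - c)))" using rate by linarith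
  hence "r * (c * (1 - c)) < 1" using c by (simp add: zero_less_mult_iff)
  have "r * (Y * (1 - Y)) \<le> r * (c * (1 - c))"
    using Y c \<open>0 \<le> r\<close> by (intro mult_left_mono mult_one_minus_antimono_above_half) auto
  hence "Y * (r * (Y * (1 - Y)) - 1) \<le> c * (r * (Y * (1 - Y)) - 1)"
    using Y \<open>r * (c * (1 - c)) < 1\<close> by (intro mult_right_mono_neg) auto
  also have "\<dots> \<le> c * (r * (c * (1 - c)) - 1)"
    using \<open>r * (Y * (1 - Y)) \<le> r * (c * (1 - c))\<close> c by (intro mult_left_mono) auto
  also have "\<dots> \<le> - \<gamma> * (p0 - c)" using rate by (simp add: algebra_simps)
  also have "\<dots> \<le> - \<gamma> * ((p0 - c) * exp (- \<gamma> * t))"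
    using mult_left_mono[OF decay_le, of \<gamma>] \<open>0 < \<gamma>\<close> by simp
  finally show "r * (c + (p0 - c) * exp (- \<gamma> * t))^2 * (1 - (c + (p0 - c) * exp (- \<gamma> * t)))
      - (c + (p0 - c) * exp (- \<gamma> * t)) \<le> - \<gamma> * ((p0 - c) * exp (- \<gamma> * t))"
    unfolding Y_def[symmetric] by (simp add: power2_eq_square algebra_simps)
qed

lemma mf_solution_le_logistic:
  assumes sol: "mf_solution a b M U" and P: "logistic_supersolution (a + b) P P'"
    and init: "\<And>x. U 0 x \<le> P 0" and "a \<ge> 0" "b \<ge> 0" "M \<ge> 1" "t \<ge> 0"
  shows "U t x \<le> P t"
  using mf_comparison[OF sol mf_bounded_supersolution_supersolution[OF logistic_supersolution_mf[OF P]]]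
    assms by simp

lemma mf_solution_le_logistic_plus_bump:
  assumes sol: "mf_solution a b M U" and P: "logistic_supersolution (a + b) P P'"
    and init: "\<And>x. \<bar>real_of_int x\<bar> \<le> R \<Longrightarrow> U 0 x \<le> P 0"
    and ab: "a \<ge> 0" "b \<ge> 0" "M \<ge> 1" and "t \<ge> 0"
  shows "U t x \<le> P t + exp (tail_rate a b M * t) * bump R x"
proof (rule mf_comparison[OF sol mf_supersolution_add_tail[OF logistic_supersolution_mf[OF P]]])
  show "U 0 y \<le> P 0 + exp (tail_rate a b M * 0) * bump R y" for y
  proof (cases "\<bar>real_of_int y\<bar> \<le> R")
    case True
    thus ?thesis using init[OF True] bump_pos[of R y] by simp
  next
    case False
    have "U 0 y \<le> 1" "0 \<le> P 0" using sol P unfolding mf_solution_def logistic_supersolution_def by auto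
    thus ?thesis using one_le_bump[of R y] False by simp
  qed
qed (use assms bump_pos bump_nbhd_le in auto)

section \<open>The retreating front\<close>

lemma below_u_minus:
  assumes "r \<ge> 4" "0 \<le> u" "u < u_minus r"
  shows "u < 1/2" "r * (u * (1 - u)) < 1"
proof -
  define s where "s = sqrt (1/4 - 1/r)"
  have "s \<ge> 0" "s^2 = 1/4 - 1/r" unfolding s_def using assms by simp_all
  have "u < 1/2 - s" using assms unfolding u_minus_def s_def by simp
  thus "u < 1/2" using \<open>s \<ge> 0\<close> by simp
  have "s^2 < (1/2 - u)^2" using \<open>u < 1/2 - s\<close> \<open>s \<ge> 0\<close> by (intro power_strict_mono) auto
  hence "u * (1 - u) < 1 / r" using \<open>s^2 = 1/4 - 1/r\<close> by (simp add: power2_eq_square algebra_simps)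
  thus "r * (u * (1 - u)) < 1" using assms by (simp add: field_simps)
qed

lemma above_u_plus:
  assumes "r \<ge> 4" "u_plus r < u"
  shows "1/2 < u" "r * (u * (1 - u)) < 1"
proof -
  define s where "s = sqrt (1/4 - 1/r)"
  have "s \<ge> 0" "s^2 = 1/4 - 1/r" unfolding s_def using assms by simp_all
  have "1/2 + s < u" using assms unfolding u_plus_def s_def by simp
  thus "1/2 < u" using \<open>s \<ge> 0\<close> by simp
  have "s^2 < (u - 1/2)^2" using \<open>1/2 + s < u\<close> \<open>s \<ge> 0\<close> by (intro power_strict_mono) auto
  hence "u * (1 - u) < 1 / r" using \<open>s^2 = 1/4 - 1/r\<close> by (simp add: power2_eq_square algebra_simps)
  thus "r * (u * (1 - u)) < 1" using assms by (simp add: field_simps)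
qed

locale retreating_front =
  fixes a b :: real and M :: nat and ulow uup t0 :: real and v :: "real \<Rightarrow> int \<Rightarrow> real"
  assumes pos: "a > 0" "b > 0" "M \<ge> 1" and supercritical: "a + b \<ge> 4"
    and ulow: "0 < ulow" "ulow < u_minus (a + b)" and uup: "u_plus (a + b) < uup" "uup \<le> 1"
    and front: "mf_solution a b M v" and front_init: "\<And>x. v 0 x = (if x < 0 then uup else ulow)"
    and retreat_time: "t0 > 0" "v t0 (-1) = ulow"
begin

abbreviation \<mu> :: real where "\<mu> \<equiv> tail_rate a b M"

definition cap :: real where "cap = (u_plus (a + b) + uup) / 2"

definition cap_rate :: real where
  "cap_rate = cap * (1 - (a + b) * (cap * (1 - cap))) / (uup - cap)"

definition low_rate :: real where "low_rate = 1 - (a + b) * (ulow * (1 - ulow))"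

lemma ab_nonneg: "a \<ge> 0" "b \<ge> 0" "a + b \<ge> 0"
  using pos by auto

lemma \<mu>_nonneg: "\<mu> \<ge> 0"
  using tail_rate_nonneg ab_nonneg by blast

lemma cap: "1/2 < cap" "cap < uup" "cap < 1" "(a + b) * (cap * (1 - cap)) < 1"
proof -
  have "u_plus (a + b) < cap" "cap < uup" using uup unfolding cap_def by auto
  thus "1/2 < cap" "(a + b) * (cap * (1 - cap)) < 1" using above_u_plus[OF supercritical] by auto
  show "cap < uup" "cap < 1" using \<open>cap < uup\<close> uup by auto
qed

lemma cap_rate_pos: "cap_rate > 0"
  unfolding cap_rate_def using cap by simp

lemma ulow_lt_half: "ulow < 1/2"
  using below_u_minus[OF supercritical _ ulow(2)] ulow by simp

lemma low_rate_pos: "low_rate > 0"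
  using below_u_minus[OF supercritical _ ulow(2)] ulow unfolding low_rate_def by simp

lemma ulow_lt_uup: "ulow < uup"
  using ulow_lt_half cap by simp

lemma cap_relaxation:
  "logistic_supersolution (a + b) (\<lambda>t. cap + (uup - cap) * exp (- cap_rate * t))
     (\<lambda>t. - cap_rate * ((uup - cap) * exp (- cap_rate * t)))"
  using cap uup cap_rate_pos ab_nonneg
  by (intro logistic_supersolution_relax) (auto simp: cap_rate_def)

lemma low_decay:
  "logistic_supersolution (a + b) (\<lambda>t. ulow * exp (- low_rate * t))
     (\<lambda>t. - low_rate * (ulow * exp (- low_rate * t)))"
proof (rule logistic_supersolution_decay)
  show "(a + b) * (p * (1 - p)) \<le> 1 - low_rate" if "0 \<le> p" "p \<le> ulow" for p
    using that ulow_lt_half ab_nonneg unfolding low_rate_def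
    by (simp add: mult_left_mono mult_one_minus_mono_below_half)
qed (use ulow ulow_lt_half low_rate_pos in auto)

lemma front_unit: "t \<ge> 0 \<Longrightarrow> 0 \<le> v t x \<and> v t x \<le> 1"
  using front unfolding mf_solution_def by auto

lemma front_le_cap_relaxation: "t \<ge> 0 \<Longrightarrow> v t x \<le> cap + (uup - cap) * exp (- cap_rate * t)"
  by (rule mf_solution_le_logistic[OF front cap_relaxation]) (use front_init ulow_lt_uup pos in auto)

lemma front_le_uup: "t \<ge> 0 \<Longrightarrow> v t x \<le> uup"
proof -
  assume "t \<ge> 0"
  hence "exp (- cap_rate * t) \<le> 1" using cap_rate_pos by simp
  hence "(uup - cap) * exp (- cap_rate * t) \<le> uup - cap" using cap by (intro mult_left_le) auto
  thus ?thesis using front_le_cap_relaxation[OF \<open>t \<ge> 0\<close>, of x] by simp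
qed

lemma front_antimono_step: "t \<ge> 0 \<Longrightarrow> v t (x + 1) \<le> v t x"
  by (rule mf_comparison[OF mf_solution_translate[OF front]
        mf_bounded_supersolution_supersolution[OF mf_solution_bounded_supersolution[OF front]]])
    (use front_init ulow_lt_uup pos in auto)

lemma front_antimono: "t \<ge> 0 \<Longrightarrow> x \<le> y \<Longrightarrow> v t y \<le> v t x"
proof -
  assume "t \<ge> 0" "x \<le> y"
  have "v t (x + int n) \<le> v t x" for n
  proof (induction n)
    case (Suc n)
    have "x + int (Suc n) = (x + int n) + 1" by simp
    thus ?case using Suc front_antimono_step[OF \<open>t \<ge> 0\<close>, of "x + int n"] by (simp only:)
  qed simp
  from this[of "nat (y - x)"] \<open>x \<le> y\<close> show ?thesis by simp
qed

text \<open>Retreat says v t0 lies below the initial data shifted by one site; comparison propagates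
  this to all later times.\<close>
lemma front_advance: "t \<ge> 0 \<Longrightarrow> v (t + t0) x \<le> v t (x + 1)"
proof (rule mf_comparison[OF mf_solution_time_shift[OF front]
      mf_bounded_supersolution_supersolution[OF mf_solution_bounded_supersolution[OF mf_solution_translate[OF front]]]])
  fix y :: int
  show "v (0 + t0) y \<le> v 0 (y + 1)"
  proof (cases "y \<ge> -1")
    case True
    thus ?thesis using front_antimono[of t0 "-1" y] retreat_time front_init by simp
  next
    case False
    thus ?thesis using front_le_uup[of t0 y] retreat_time front_init by simp
  qed
qed (use retreat_time pos in auto)

lemma front_advance_iter: "t \<ge> 0 \<Longrightarrow> v (real n * t0 + t) x \<le> v t (x + int n)"
proof (induction n arbitrary: x)
  case (Suc n)
  have "v (real (Suc n) * t0 + t) x = v ((real n * t0 + t) + t0) x" by (simp add: algebra_simps)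
  also have "\<dots> \<le> v (real n * t0 + t) (x + 1)" using Suc retreat_time by (intro front_advance) auto
  also have "\<dots> \<le> v t (x + 1 + int n)" using Suc by blast
  finally show ?case by (simp add: ac_simps)
qed simp

lemma front_tail: "t \<ge> 0 \<Longrightarrow> v t x \<le> ulow * exp (- low_rate * t) + exp (\<mu> * t) * exp (- real_of_int x)"
proof (rule mf_comparison[OF front mf_supersolution_add_tail[OF logistic_supersolution_mf[OF low_decay]]])
  show "exp (- real_of_int y) \<le> exp (real M) * exp (- real_of_int x)" if "\<bar>y - x\<bar> \<le> int M" for x y
    using exp_diff_nbhd_le[OF that, of 0] by simp
  show "v 0 y \<le> ulow * exp (- low_rate * 0) + exp (\<mu> * 0) * exp (- real_of_int y)" for y
  proof (cases "y < 0")
    case True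
    hence "1 \<le> exp (- real_of_int y)" by simp
    thus ?thesis using front_init[of y] True uup ulow by (simp del: one_le_exp_iff)
  qed (use front_init in simp)
qed (use pos in auto)

lemma front_recedes: "\<exists>T>0. \<exists>m>0. \<forall>x. v T x \<le> uup - m \<and> (-1 \<le> x \<longrightarrow> v T x \<le> ulow - m)"
proof -
  \<comment> \<open>Wait until the tail of v t0 at site N is negligible, then advance the front N + 1 more periods.\<close>
  define target where "target = ulow * (1 - exp (- low_rate * t0)) / 2"
  have "exp (- low_rate * t0) < 1" using low_rate_pos retreat_time by simp
  hence "target > 0" unfolding target_def using ulow by simp
  define N where "N = nat \<lceil>\<mu> * t0 - ln target\<rceil>"
  define T where "T = (real N + 2) * t0"
  define m where "m = min (ulow - (ulow * exp (- low_rate * t0) + target))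
                        ((uup - cap) * (1 - exp (- cap_rate * T)))"
  have "T > 0" unfolding T_def using retreat_time by simp
  have "ulow * exp (- low_rate * t0) < ulow"
    using mult_strict_left_mono[OF \<open>exp (- low_rate * t0) < 1\<close>] ulow by simp
  hence "ulow * exp (- low_rate * t0) + target < ulow" unfolding target_def by (simp add: field_simps)
  moreover have "exp (- cap_rate * T) < 1" using cap_rate_pos \<open>T > 0\<close> by simp
  ultimately have "m > 0" unfolding m_def using cap by simp
  have "exp (\<mu> * t0) * exp (- real N) = exp (\<mu> * t0 - real N)" by (simp add: exp_diff exp_minus field_simps)
  also have "\<dots> \<le> exp (ln target)" unfolding N_def by simp linarith
  finally have tail_small: "exp (\<mu> * t0) * exp (- real N) \<le> target" using \<open>target > 0\<close> by simp
  have "v T x \<le> uup - m" for x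
    using front_le_cap_relaxation[of T x] \<open>T > 0\<close> unfolding m_def by (simp add: algebra_simps)
  moreover have "v T x \<le> ulow - m" if "-1 \<le> x" for x
  proof -
    have "v T x \<le> v T (-1)" using that \<open>T > 0\<close> by (intro front_antimono) auto
    also have "T = real (N + 1) * t0 + t0" unfolding T_def by (simp add: algebra_simps)
    hence "v T (-1) \<le> v t0 (int N)" using front_advance_iter[of t0 "N + 1" "-1"] retreat_time by simp
    also have "\<dots> \<le> ulow * exp (- low_rate * t0) + target"
      using front_tail[of t0 "int N"] retreat_time tail_small by simp
    finally show ?thesis unfolding m_def by simp
  qed
  ultimately show ?thesis using \<open>T > 0\<close> \<open>m > 0\<close> by blast
qed

definition entry_rate :: real where
  "entry_rate = cap * (1 - (a + b) * (cap * (1 - cap))) / (1 - cap)"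

definition entry_time :: real where
  "entry_time = ln ((1 - cap) / (uup - cap)) / entry_rate"

lemma entry_rate_pos: "entry_rate > 0"
  unfolding entry_rate_def using cap by simp

lemma entry_time_nonneg: "entry_time \<ge> 0"
  unfolding entry_time_def using cap uup entry_rate_pos by simp

lemma le_uup_at_entry_time:
  assumes "mf_solution a b M U"
  shows "U entry_time x \<le> uup"
proof -
  have "logistic_supersolution (a + b) (\<lambda>t. cap + (1 - cap) * exp (- entry_rate * t))
          (\<lambda>t. - entry_rate * ((1 - cap) * exp (- entry_rate * t)))"
    using cap entry_rate_pos ab_nonneg by (intro logistic_supersolution_relax) (auto simp: entry_rate_def)
  from mf_solution_le_logistic[OF assms this]
  have "U entry_time x \<le> cap + (1 - cap) * exp (- entry_rate * entry_time)"
    using assms entry_time_nonneg pos unfolding mf_solution_def by simp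
  also have "exp (- entry_rate * entry_time) = (uup - cap) / (1 - cap)"
    unfolding entry_time_def using entry_rate_pos cap by (simp add: exp_minus)
  finally show ?thesis using cap by simp
qed

lemma low_at_entry_time:
  assumes sol: "mf_solution a b M U"
    and init: "\<And>x. \<bar>real_of_int x\<bar> \<le> R + \<mu> * entry_time + ln (4 / ulow) \<Longrightarrow> U 0 x \<le> ulow / 2"
    and "\<bar>real_of_int y\<bar> \<le> R"
  shows "U entry_time y \<le> ulow"
proof -
  define L where "L = R + \<mu> * entry_time + ln (4 / ulow)"
  have "logistic_supersolution (a + b) (\<lambda>t. ulow / 2 * exp (- 0 * t)) (\<lambda>t. - 0 * (ulow / 2 * exp (- 0 * t)))"
  proof (rule logistic_supersolution_decay)
    show "(a + b) * (p * (1 - p)) \<le> 1 - 0" if "0 \<le> p" "p \<le> ulow / 2" for p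
      using below_u_minus(2)[OF supercritical, of p] that ulow by simp
  qed (use ulow ulow_lt_half in auto)
  from mf_solution_le_logistic_plus_bump[OF sol this, of L]
  have "U entry_time y \<le> ulow / 2 + exp (\<mu> * entry_time) * bump L y"
    using init entry_time_nonneg pos unfolding L_def by simp
  also have "exp (\<mu> * entry_time) * bump L y \<le> exp (\<mu> * entry_time) * (2 * exp (R - L))"
    using bump_le[of L y] \<open>\<bar>real_of_int y\<bar> \<le> R\<close> by (smt (verit) exp_gt_zero exp_le_cancel_iff mult_left_mono)
  also have "\<dots> = 2 * exp (- ln (4 / ulow))"
    unfolding L_def by (simp add: exp_add[symmetric] algebra_simps)
  also have "\<dots> = ulow / 2" using ulow by (simp add: exp_minus)
  finally show ?thesis by simp
qed

end

section \<open>Spreading of small intervals\<close>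

locale receding_front = retreating_front +
  fixes T m :: real
  assumes period_pos: "T > 0" and margin_pos: "m > 0"
    and recede_hi: "\<And>x. v T x \<le> uup - m" and recede_lo: "\<And>x. -1 \<le> x \<Longrightarrow> v T x \<le> ulow - m"
begin

definition width :: real where "width = \<mu> * T - ln m"

text \<open>Compare U with the receding front reflected at the right end of the interval; the weight
  exp (XL - y) covers the data left of the interval and has fallen below the margin m at time T
  beyond distance width.\<close>
lemma interval_spreads_right:
  assumes sol: "mf_solution a b M U" and up: "\<And>x. U 0 x \<le> uup"
    and low: "\<And>x. XL \<le> real_of_int x \<Longrightarrow> real_of_int x \<le> XR \<Longrightarrow> U 0 x \<le> ulow"
    and wide: "2 * width \<le> XR - XL" and x: "(XL + XR) / 2 \<le> real_of_int x"
  shows "U T x \<le> uup" and "real_of_int x \<le> XR + 1 \<Longrightarrow> U T x \<le> ulow"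
proof -
  define k where "k = \<lfloor>XR\<rfloor>"
  have "U T x \<le> v T (k - x) + exp (\<mu> * T) * exp (XL - real_of_int x)"
  proof (rule mf_comparison[OF sol mf_supersolution_add_tail[OF
        mf_solution_bounded_supersolution[OF mf_solution_reflect[OF front, where k=k]],
        where G="\<lambda>y. exp (XL - real_of_int y)"]])
    show "U 0 y \<le> v 0 (k - y) + exp (\<mu> * 0) * exp (XL - real_of_int y)" for y
    proof (cases "real_of_int y < XL")
      case True
      hence "1 \<le> exp (XL - real_of_int y)" by simp
      thus ?thesis using up[of y] front_unit[of 0 "k - y"] uup by (simp del: one_le_exp_iff)
    next
      case False
      show ?thesis
      proof (cases "real_of_int y \<le> XR")
        case True
        hence "y \<le> k" unfolding k_def by linarith
        hence "v 0 (k - y) = ulow" using front_init by simp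
        thus ?thesis using low[of y] False True by (simp add: add_increasing2)
      next
        case False
        hence "k < y" unfolding k_def by linarith
        hence "v 0 (k - y) = uup" using front_init by simp
        thus ?thesis using up[of y] by (simp add: add_increasing2)
      qed
    qed
  qed (use exp_diff_nbhd_le pos period_pos in auto)
  moreover have "exp (\<mu> * T) * exp (XL - real_of_int x) \<le> m"
  proof -
    have "exp (\<mu> * T) * exp (XL - real_of_int x) = exp (\<mu> * T + (XL - real_of_int x))"
      by (simp add: exp_add)
    also have "\<dots> \<le> exp (\<mu> * T - width)" using wide x by simp
    also have "\<dots> = m" unfolding width_def using margin_pos by simp
    finally show ?thesis .
  qed
  ultimately have "U T x \<le> v T (k - x) + m" by simp
  thus "U T x \<le> uup" using recede_hi[of "k - x"] by simp
  assume "real_of_int x \<le> XR + 1"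
  hence "-1 \<le> k - x" unfolding k_def by linarith
  thus "U T x \<le> ulow" using recede_lo[of "k - x"] \<open>U T x \<le> v T (k - x) + m\<close> by simp
qed

lemma interval_spreads:
  assumes sol: "mf_solution a b M U" and "width \<le> R"
    and up: "\<And>x. U 0 x \<le> uup" and low: "\<And>x. \<bar>real_of_int x\<bar> \<le> R \<Longrightarrow> U 0 x \<le> ulow"
  shows "U (real n * T) x \<le> uup \<and> (\<bar>real_of_int x\<bar> \<le> R + real n \<longrightarrow> U (real n * T) x \<le> ulow)"
proof (induction n arbitrary: x)
  case 0
  then show ?case using up low by simp
next
  case (Suc n)
  \<comment> \<open>Restart at time n T; sites x < 0 are handled by the mirror image of the solution.\<close>
  define R' where "R' = R + real n"
  define U' where "U' t y = U (t + real n * T) y" for t y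
  define U'' where "U'' t y = U' t (0 - y)" for t y
  have "mf_solution a b M U'" unfolding U'_def using mf_solution_time_shift[OF sol] period_pos by simp
  hence "mf_solution a b M U''" unfolding U''_def by (rule mf_solution_reflect)
  have wide: "2 * width \<le> R' - - R'" unfolding R'_def using \<open>width \<le> R\<close> by simp
  have time: "real (Suc n) * T = T + real n * T" by (simp add: algebra_simps)
  show ?case
  proof (cases "x \<ge> 0")
    case True
    have "(- R' + R') / 2 \<le> real_of_int x" using True by simp
    from interval_spreads_right[OF \<open>mf_solution a b M U'\<close> _ _ wide this] Suc.IH True
    show ?thesis unfolding U'_def R'_def time by (auto simp: abs_le_iff)
  next
    case False
    have "(- R' + R') / 2 \<le> real_of_int (- x)" using False by simp
    from interval_spreads_right[OF \<open>mf_solution a b M U''\<close> _ _ wide this] Suc.IH False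
    show ?thesis unfolding U''_def U'_def R'_def time by (auto simp: abs_le_iff)
  qed
qed

definition core_radius :: real where "core_radius = max width 0"

definition entry_radius :: real where
  "entry_radius = core_radius + \<mu> * entry_time + ln (4 / ulow)"

definition decay_time :: "real \<Rightarrow> real" where
  "decay_time \<epsilon> = max 0 (ln (2 / \<epsilon>) / low_rate)"

definition lag :: "real \<Rightarrow> real" where
  "lag \<epsilon> = (entry_time + decay_time \<epsilon>) / T + 1 + \<mu> * (decay_time \<epsilon> + T) + \<bar>ln (4 / \<epsilon>)\<bar>"

lemma entry_radius_pos: "entry_radius > 0"
proof -
  have "0 < ln (4 / ulow)" using ulow ulow_lt_half by simp
  moreover have "0 \<le> \<mu> * entry_time" using \<mu>_nonneg entry_time_nonneg by simp
  ultimately show ?thesis unfolding entry_radius_def core_radius_def by linarith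
qed

lemma lag_ge: "(entry_time + decay_time \<epsilon>) / T + 1 \<le> lag \<epsilon>"
  unfolding lag_def using \<mu>_nonneg period_pos by (simp add: decay_time_def)

lemma lag_pos: "lag \<epsilon> > 0"
proof -
  have "0 \<le> (entry_time + decay_time \<epsilon>) / T"
    using entry_time_nonneg period_pos by (simp add: decay_time_def)
  thus ?thesis using lag_ge[of \<epsilon>] by linarith
qed

lemma low_on_spreading_core:
  assumes sol: "mf_solution a b M U" and init: "\<And>x. \<bar>real_of_int x\<bar> \<le> entry_radius \<Longrightarrow> U 0 x \<le> ulow / 2"
    and x: "\<bar>real_of_int x\<bar> \<le> core_radius + real n"
  shows "U (entry_time + real n * T) x \<le> ulow"
proof -
  define U' where "U' t y = U (t + entry_time) y" for t y
  have "mf_solution a b M U'" unfolding U'_def by (rule mf_solution_time_shift[OF sol entry_time_nonneg])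
  moreover have "width \<le> core_radius" unfolding core_radius_def by simp
  moreover have "U' 0 y \<le> uup" for y unfolding U'_def using le_uup_at_entry_time[OF sol] by simp
  moreover have "U' 0 y \<le> ulow" if "\<bar>real_of_int y\<bar> \<le> core_radius" for y
    unfolding U'_def using low_at_entry_time[OF sol _ that] init unfolding entry_radius_def by simp
  ultimately have "U' (real n * T) x \<le> ulow" using interval_spreads[of U' core_radius] x by blast
  thus ?thesis unfolding U'_def by (simp add: add.commute)
qed

lemma small_behind_spreading_core:
  assumes sol: "mf_solution a b M U" and init: "\<And>x. \<bar>real_of_int x\<bar> \<le> entry_radius \<Longrightarrow> U 0 x \<le> ulow / 2"
    and "\<epsilon> > 0" and x: "\<bar>real_of_int x\<bar> \<le> 1 / T * t - lag \<epsilon>"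
  shows "U t x \<le> \<epsilon>"
proof -
  \<comment> \<open>Split t = entry_time + n T + s with decay_time \<epsilon> \<le> s < decay_time \<epsilon> + T.\<close>
  define se where "se = decay_time \<epsilon>"
  have "se \<ge> 0" unfolding se_def decay_time_def by simp
  have "(entry_time + se) / T \<le> t / T" using x lag_ge[of \<epsilon>] unfolding se_def by simp
  hence "0 \<le> (t - entry_time - se) / T" using period_pos by (simp add: divide_le_cancel)
  define n where "n = nat \<lfloor>(t - entry_time - se) / T\<rfloor>"
  have n: "real n \<le> (t - entry_time - se) / T" "(t - entry_time - se) / T < real n + 1"
    unfolding n_def using \<open>0 \<le> (t - entry_time - se) / T\<close> by linarith+
  define s where "s = t - (entry_time + real n * T)"
  have s: "se \<le> s" "s < se + T" using n period_pos unfolding s_def by (simp_all add: field_simps)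
  define U' where "U' r y = U (r + (entry_time + real n * T)) y" for r y
  have "mf_solution a b M U'" unfolding U'_def
    using mf_solution_time_shift[OF sol] entry_time_nonneg period_pos by simp
  from mf_solution_le_logistic_plus_bump[OF this low_decay, of "core_radius + real n" s x]
  have "U t x \<le> ulow * exp (- low_rate * s) + exp (\<mu> * s) * bump (core_radius + real n) x"
    using low_on_spreading_core[OF sol init] s \<open>se \<ge> 0\<close> pos unfolding U'_def s_def by simp
  also have "\<dots> \<le> \<epsilon>"
  proof (rule decay_plus_bump_le)
    have "ln (2 / \<epsilon>) / low_rate \<le> s" using s unfolding se_def decay_time_def by simp
    thus "ln (2 / \<epsilon>) \<le> low_rate * s" using low_rate_pos by (simp add: divide_le_eq mult.commute)
    have "t / T < real n + 1 + (entry_time + se) / T" using n(2) period_pos by (simp add: field_simps)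
    hence "\<bar>real_of_int x\<bar> < real n - \<mu> * (se + T) - \<bar>ln (4 / \<epsilon>)\<bar>"
      using x unfolding lag_def se_def by simp
    moreover have "\<mu> * s \<le> \<mu> * (se + T)" using s \<mu>_nonneg by (intro mult_left_mono) auto
    ultimately show "\<mu> * s + \<bar>real_of_int x\<bar> - (core_radius + real n) \<le> - ln (4 / \<epsilon>)"
      unfolding core_radius_def by linarith
  qed (use \<open>\<epsilon> > 0\<close> ulow ulow_lt_half in auto)
  finally show ?thesis .
qed

end

lemma (in retreating_front) spreading_bound:
  "\<exists>u L c :: real. 0 < u \<and> 0 < L \<and> 0 < c \<and> u < u_minus (a + b) \<and>
     (\<forall>\<epsilon>>0. \<exists>x0>0. \<forall>U. mf_solution a b M U \<longrightarrow>
        (\<forall>x. \<bar>real_of_int x\<bar> \<le> L \<longrightarrow> U 0 x \<le> u) \<longrightarrow>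
        (\<forall>t>0. \<forall>x. \<bar>real_of_int x\<bar> \<le> c * t - x0 \<longrightarrow> U t x \<le> \<epsilon>))"
proof -
  obtain T m where "T > 0" "m > 0" "\<And>x. v T x \<le> uup - m" "\<And>x. -1 \<le> x \<Longrightarrow> v T x \<le> ulow - m"
    using front_recedes by blast
  then interpret receding_front a b M ulow uup t0 v T m by unfold_locales auto
  show ?thesis
  proof (rule exI[of _ "ulow / 2"], rule exI[of _ entry_radius], rule exI[of _ "1 / T"], intro conjI allI impI)
    show "0 < ulow / 2" "ulow / 2 < u_minus (a + b)" "0 < entry_radius" "0 < 1 / T"
      using ulow entry_radius_pos period_pos by auto
    fix \<epsilon> :: real assume "\<epsilon> > 0"
    show "\<exists>x0>0. \<forall>U. mf_solution a b M U \<longrightarrow> (\<forall>x. \<bar>real_of_int x\<bar> \<le> entry_radius \<longrightarrow> U 0 x \<le> ulow / 2) \<longrightarrow>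
        (\<forall>t>0. \<forall>x. \<bar>real_of_int x\<bar> \<le> 1 / T * t - x0 \<longrightarrow> U t x \<le> \<epsilon>)"
      using small_behind_spreading_core \<open>\<epsilon> > 0\<close> lag_pos by blast
  qed
qed

lemma subcritical_spreading_bound:
  assumes ab: "a > 0" "b > 0" "M \<ge> 1" and "a + b < 4"
  shows "\<exists>u L c :: real. 0 < u \<and> 0 < L \<and> 0 < c \<and>
     (\<forall>\<epsilon>>0. \<exists>x0>0. \<forall>U. mf_solution a b M U \<longrightarrow>
        (\<forall>x. \<bar>real_of_int x\<bar> \<le> L \<longrightarrow> U 0 x \<le> u) \<longrightarrow>
        (\<forall>t>0. \<forall>x. \<bar>real_of_int x\<bar> \<le> c * t - x0 \<longrightarrow> U t x \<le> \<epsilon>))"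
proof (rule exI[of _ 1], rule exI[of _ 1], rule exI[of _ 1], intro conjI allI impI zero_less_one)
  define k where "k = 1 - (a + b) / 4"
  have "k > 0" unfolding k_def using \<open>a + b < 4\<close> by simp
  have decay: "logistic_supersolution (a + b) (\<lambda>t. 1 * exp (- k * t)) (\<lambda>t. - k * (1 * exp (- k * t)))"
  proof (rule logistic_supersolution_decay)
    show "(a + b) * (p * (1 - p)) \<le> 1 - k" for p
    proof -
      have "p * (1 - p) \<le> 1/4" using sum_squares_ge_zero[of "2*p - 1" 0] by (simp add: power2_eq_square algebra_simps)
      hence "(a + b) * (p * (1 - p)) \<le> (a + b) * (1/4)" using ab by (intro mult_left_mono) auto
      thus ?thesis unfolding k_def by simp
    qed
  qed (use \<open>k > 0\<close> in auto)
  fix \<epsilon> :: real assume "\<epsilon> > 0"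
  define x0 where "x0 = max 1 (ln (1 / \<epsilon>) / k)"
  show "\<exists>x0>0. \<forall>U. mf_solution a b M U \<longrightarrow> (\<forall>x. \<bar>real_of_int x\<bar> \<le> 1 \<longrightarrow> U 0 x \<le> 1) \<longrightarrow>
      (\<forall>t>0. \<forall>x. \<bar>real_of_int x\<bar> \<le> 1 * t - x0 \<longrightarrow> U t x \<le> \<epsilon>)"
  proof (intro exI[of _ x0] conjI allI impI)
    show "x0 > 0" unfolding x0_def by simp
    fix U t x assume sol: "mf_solution a b M U" and "t > 0" and x: "\<bar>real_of_int x\<bar> \<le> 1 * t - x0"
    have "ln (1 / \<epsilon>) / k \<le> t" using x unfolding x0_def by linarith
    hence "ln (1 / \<epsilon>) \<le> k * t" using \<open>k > 0\<close> by (simp add: divide_le_eq mult.commute)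
    have "U t x \<le> exp (- k * t)"
      using mf_solution_le_logistic[OF sol decay] sol ab \<open>t > 0\<close> unfolding mf_solution_def by simp
    also have "\<dots> \<le> exp (- ln (1 / \<epsilon>))" using \<open>ln (1 / \<epsilon>) \<le> k * t\<close> by simp
    also have "\<dots> = \<epsilon>" using \<open>\<epsilon> > 0\<close> by (simp add: exp_minus)
    finally show "U t x \<le> \<epsilon>" .
  qed
qed

theorem lemma9p1:
  fixes a b :: real and M :: nat
  assumes "a > 0" and "b > 0" and "M \<ge> 1"
    and "retreat a b M"
  shows "\<exists>u L c :: real. 0 < u \<and> 0 < L \<and> 0 < c \<and> (a + b \<ge> 4 \<longrightarrow> u < u_minus (a + b)) \<and>
     (\<forall>\<epsilon>>0. \<exists>x0>0. \<forall>U. mf_solution a b M U \<longrightarrow>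
        (\<forall>x. \<bar>real_of_int x\<bar> \<le> L \<longrightarrow> U 0 x \<le> u) \<longrightarrow>
        (\<forall>t>0. \<forall>x. \<bar>real_of_int x\<bar> \<le> c * t - x0 \<longrightarrow> U t x \<le> \<epsilon>))"
proof (cases "a + b < 4")
  case True
  from subcritical_spreading_bound[OF assms(1-3) True] show ?thesis using True by auto
next
  case False
  then obtain ulow uup v t0 where "0 < ulow" "ulow < u_minus (a + b)" "u_plus (a + b) < uup" "uup \<le> 1"
      "mf_solution a b M v" "\<forall>x. v 0 x = (if x < 0 then uup else ulow)" "t0 > 0" "v t0 (-1) = ulow"
    using assms(4) unfolding retreat_def by blast
  then interpret retreating_front a b M ulow uup t0 v
    using assms(1-3) False by unfold_locales auto
  from spreading_bound show ?thesis by blast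
qed

end
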